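(* Consider the PSSG described in the context in the MIDDLE-MIDDLE scenario: $(L+x_1)\lambda<k_1\mu_1\le(L+x_2)\lambda$ and $(L-x_2)\lambda<k_2\mu_2\le(L-x_1)\lambda$, and assume $k_1\mu_1+k_2\mu_2>2L\lambda$. Then for any prices $p_1,p_2\in[p_{\min},p_{\max}]$ the equation $$k_pd(p_1-p_2)+k_l(2x-x_1-x_2)+k_q\big(q_1(x+L)-q_2(L-x)\big)=0$$ has a unique root $x^*$, which satisfies $L-\frac{k_2\mu_2}{\lambda}<x^*<\frac{k_1\mu_1}{\lambda}-L$, and the Nash equilibrium of the PSSG is: every PEV at $x\in[-L,x^*]$ selects station 1 and every PEV at $x\in(x^*,L]$ selects station 2.
   Context: The system is the segment $[-L,L]$ ($L>0$) with two charging stations located at $x_1<x_2$, $-L<x_1<x_2<L$. Station $i\in\{1,2\}$ has $k_i\ge 1$ (integer) identical charging ports, PEV service times with mean $1/\mu_i$ ($\mu_i>0$) and variance $\sigma_i^2$, and announces a price $p_i\in[p_{\min},p_{\max}]$. A continuum of PEVs is uniformly distributed on $[-L,L]$, generating charging requests at rate $\lambda>0$ per unit length. Each PEV at location $x$ selects station 1 or 2, possibly at random; a strategy profile is described by the probability $\omega(x)\in[0,1]$ that the PEV at $x$ selects station 1. Let $a_1=\int_{-L}^{L}\omega(x)\,dx$ and $a_2=2L-a_1$. For $0\le a<k_i\mu_i/\lambda$, $$q_i(a)=\frac{a\lambda\,(\sigma_i^2+\frac{1}{\mu_i^2})\,\rho^{k_i-1}}{2(k_i-1)!\,(k_i-\rho)^2\Big[\sum_{m=0}^{k_i-1}\frac{\rho^m}{m!}+\frac{\rho^{k_i}}{(k_i-1)!(k_i-\rho)}\Big]},\qquad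 \rho=\frac{a\lambda}{\mu_i},$$ is the mean waiting time at station $i$, and $q_i(a)=+\infty$ if $a\ge k_i\mu_i/\lambda$ (overloaded queue). Given $a_1,a_2$ (which a single PEV cannot change), a PEV at $x$ selecting station $i$ gets payoff $U(i;x)=-k_l|x-x_i|-k_q\,q_i(a_i)-k_p\,d\,p_i$, with constants $k_l,k_q,k_p,d>0$; a randomized choice yields the expected payoff. A Nash equilibrium of the PSSG is a profile in which every PEV's (possibly mixed) choice maximizes its expected payoff given $a_1,a_2$. *)

theory Defs
  imports "HOL-Analysis.Analysis"
begin

text \<open>Mean waiting time q_i(a) at a station with k ports, mean service time 1/mu,
  service-time standard deviation sg (variance sg^2), request rate lam per unit length.\<close>
definition qwait :: "nat \<Rightarrow> real \<Rightarrow> real \<Rightarrow> real \<Rightarrow> real \<Rightarrow> ereal" where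
  "qwait k mu sg lam a =
     (if a < real k * mu / lam then
        (let \<rho> = a * lam / mu in
         ereal ((a * lam * (sg\<^sup>2 + 1 / mu\<^sup>2) * \<rho> ^ (k - 1)) /
           (2 * fact (k - 1) * (real k - \<rho>)\<^sup>2 *
             ((\<Sum>m<k. \<rho> ^ m / fact m) + \<rho> ^ k / (fact (k - 1) * (real k - \<rho>))))))
      else \<infinity>)"

definition payoff :: "real \<Rightarrow> real \<Rightarrow> real \<Rightarrow> real \<Rightarrow> real \<Rightarrow> real \<Rightarrow> ereal \<Rightarrow> real \<Rightarrow> ereal" where
  "payoff kl kq kp d xi pri Q x = ereal (- kl * \<bar>x - xi\<bar> - kp * d * pri) - ereal kq * Q"

definition mixed_payoff :: "real \<Rightarrow> ereal \<Rightarrow> ereal \<Rightarrow> ereal" where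
  "mixed_payoff w u1 u2 = ereal w * u1 + ereal (1 - w) * u2"

text \<open>Nash equilibrium of the PSSG: omega x = probability that the PEV at x selects station 1.\<close>
definition pssg_NE ::
  "real \<Rightarrow> real \<Rightarrow> real \<Rightarrow> nat \<Rightarrow> real \<Rightarrow> real \<Rightarrow> nat \<Rightarrow> real \<Rightarrow> real \<Rightarrow> real \<Rightarrow>
   real \<Rightarrow> real \<Rightarrow> real \<Rightarrow> real \<Rightarrow> real \<Rightarrow> real \<Rightarrow> (real \<Rightarrow> real) \<Rightarrow> bool" where
  "pssg_NE L x1 x2 k1 mu1 sg1 k2 mu2 sg2 lam kl kq kp d p1 p2 \<omega> \<longleftrightarrow>
     (\<forall>x\<in>{-L..L}. 0 \<le> \<omega> x \<and> \<omega> x \<le> 1) \<and> \<omega> integrable_on {-L..L} \<and>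
     (let a1 = integral {-L..L} \<omega>; a2 = 2 * L - a1;
          Q1 = qwait k1 mu1 sg1 lam a1; Q2 = qwait k2 mu2 sg2 lam a2 in
      \<forall>x\<in>{-L..L}. \<forall>w\<in>{0..1}.
        mixed_payoff w (payoff kl kq kp d x1 p1 Q1 x) (payoff kl kq kp d x2 p2 Q2 x)
        \<le> mixed_payoff (\<omega> x) (payoff kl kq kp d x1 p1 Q1 x) (payoff kl kq kp d x2 p2 Q2 x))"

definition pssg_eq ::
  "real \<Rightarrow> real \<Rightarrow> real \<Rightarrow> nat \<Rightarrow> real \<Rightarrow> real \<Rightarrow> nat \<Rightarrow> real \<Rightarrow> real \<Rightarrow> real \<Rightarrow>
   real \<Rightarrow> real \<Rightarrow> real \<Rightarrow> real \<Rightarrow> real \<Rightarrow> real \<Rightarrow> real \<Rightarrow> ereal" where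
  "pssg_eq L x1 x2 k1 mu1 sg1 k2 mu2 sg2 lam kl kq kp d p1 p2 x =
     ereal (kp * d * (p1 - p2) + kl * (2 * x - x1 - x2)) +
     ereal kq * (qwait k1 mu1 sg1 lam (x + L) - qwait k2 mu2 sg2 lam (L - x))"

end

theory Submission
  imports Defs
begin

text \<open>A threshold split at \<open>x\<close> loads station 1 with \<open>x + L\<close> and station 2 with \<open>L - x\<close>;
  neither station is overloaded exactly on the window \<open>L - c\<^sub>2 < x < c\<^sub>1 - L\<close>,
  where \<open>c\<^sub>i = k\<^sub>i \<mu>\<^sub>i / \<lambda>\<close>. The Erlang waiting time increases strictly in the
  load and blows up at capacity, so on the window the left-hand side of the threshold equation is
  continuous, strictly increasing, and runs from \<open>-\<infinity>\<close> to \<open>\<infinity>\<close>: it has a unique root \<open>x\<^sup>*\<close>.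
  At the load \<open>x\<^sup>* + L\<close> the waiting times balance the prices, so a PEV prefers station 1
  exactly when it lies left of \<open>x\<^sup>*\<close>, and the threshold strategy is an equilibrium. In any
  equilibrium an overloaded station would be abandoned by everybody, so both queues are finite;
  a load of station 1 below (above) \<open>x\<^sup>* + L\<close> would make it strictly more (less) attractive to
  everybody, pushing the load back up (down). Hence the load is \<open>x\<^sup>* + L\<close>, and every PEV other
  than the one at \<open>x\<^sup>*\<close> has a strict preference.\<close>

section \<open>Erlang waiting time\<close>

definition erlang_wait :: "nat \<Rightarrow> real \<Rightarrow> real \<Rightarrow> real \<Rightarrow> real \<Rightarrow> real" where
  "erlang_wait k mu sg lam a =
     (let \<rho> = a * lam / mu in
      (a * lam * (sg\<^sup>2 + 1 / mu\<^sup>2) * \<rho> ^ (k - 1)) /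
        (2 * fact (k - 1) * (real k - \<rho>)\<^sup>2 *
          ((\<Sum>m<k. \<rho> ^ m / fact m) + \<rho> ^ k / (fact (k - 1) * (real k - \<rho>)))))"

lemma qwait_eq_erlang_wait:
  "qwait k mu sg lam a =
     (if a < real k * mu / lam then ereal (erlang_wait k mu sg lam a) else \<infinity>)"
  by (simp add: qwait_def erlang_wait_def Let_def)

text \<open>Since \<open>(\<Sum>m<k. r ^ m / fact m) = r ^ k * erlang_sum k r\<close>, dividing numerator and
  denominator of the waiting time by \<open>\<rho> ^ k\<close> leaves a positive constant over
  \<open>erlang_denom k \<rho>\<close>, which decreases strictly to \<open>0\<close> as \<open>\<rho>\<close> approaches \<open>k\<close>.\<close>
definition erlang_sum :: "nat \<Rightarrow> real \<Rightarrow> real" where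
  "erlang_sum k r = (\<Sum>m<k. 1 / (fact m * r ^ (k - m)))"

definition erlang_denom :: "nat \<Rightarrow> real \<Rightarrow> real" where
  "erlang_denom k r = (real k - r) * (1 + fact (k - 1) * (real k - r) * erlang_sum k r)"

lemma erlang_sum_nonneg: "0 < r \<Longrightarrow> 0 \<le> erlang_sum k r"
  unfolding erlang_sum_def by (intro sum_nonneg) simp

lemma erlang_sum_antimono: "0 < r \<Longrightarrow> r \<le> s \<Longrightarrow> erlang_sum k s \<le> erlang_sum k r"
  unfolding erlang_sum_def
proof (intro sum_mono)
  fix m assume "0 < r" "r \<le> s"
  then have "r ^ (k - m) \<le> s ^ (k - m)" by (intro power_mono) auto
  with \<open>0 < r\<close> \<open>r \<le> s\<close> show "1 / (fact m * s ^ (k - m)) \<le> 1 / (fact m * r ^ (k - m))"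
    by (intro divide_left_mono mult_left_mono mult_pos_pos) auto
qed

lemma erlang_denom_pos: "0 < r \<Longrightarrow> r < real k \<Longrightarrow> 0 < erlang_denom k r"
  unfolding erlang_denom_def using erlang_sum_nonneg[of r k]
  by (intro mult_pos_pos) (auto intro!: add_pos_nonneg mult_nonneg_nonneg)

lemma erlang_denom_strict_antimono:
  assumes "0 < r" "r < s" "s < real k"
  shows "erlang_denom k s < erlang_denom k r"
proof -
  define As where "As = 1 + fact (k - 1) * (real k - s) * erlang_sum k s"
  define Ar where "Ar = 1 + fact (k - 1) * (real k - r) * erlang_sum k r"
  have sums: "erlang_sum k s \<le> erlang_sum k r" "0 \<le> erlang_sum k s"
    using assms erlang_sum_antimono[of r s k] erlang_sum_nonneg[of s k] by auto
  then have "As \<le> Ar" unfolding As_def Ar_def using assms by (simp add: mult_mono)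
  have "1 \<le> As" unfolding As_def using assms sums by simp
  have "(real k - s) * As \<le> (real k - s) * Ar" using assms \<open>As \<le> Ar\<close> by (intro mult_left_mono) auto
  also have "\<dots> < (real k - r) * Ar" using assms \<open>1 \<le> As\<close> \<open>As \<le> Ar\<close> by (intro mult_strict_right_mono) auto
  finally show ?thesis unfolding erlang_denom_def As_def Ar_def .
qed

lemma erlang_wait_eq_denom:
  assumes "1 \<le> k" "0 < mu" "0 < lam" "0 < a" "a < real k * mu / lam"
  shows "erlang_wait k mu sg lam a = (mu * sg\<^sup>2 + 1 / mu) / (2 * erlang_denom k (a * lam / mu))"
proof -
  define r where "r = a * lam / mu"
  have r: "0 < r" "r < real k" using assms unfolding r_def by (auto simp: field_simps)
  define F where "F = (fact (k - 1) :: real)"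
  have F: "0 < F" unfolding F_def by simp
  have sum_eq: "(\<Sum>m<k. r ^ m / fact m) = r ^ k * erlang_sum k r"
    unfolding erlang_sum_def sum_distrib_left
  proof (intro sum.cong refl)
    fix m assume "m \<in> {..<k}"
    then have "r ^ k = r ^ m * r ^ (k - m)" by (simp add: power_add[symmetric])
    with r show "r ^ m / fact m = r ^ k * (1 / (fact m * r ^ (k - m)))" by (simp add: field_simps)
  qed
  have "a * lam * r ^ (k - 1) = mu * r ^ k"
    using assms by (cases k) (auto simp: r_def)
  then have "erlang_wait k mu sg lam a = mu * (sg\<^sup>2 + 1 / mu\<^sup>2) * r ^ k /
      (2 * F * (real k - r)\<^sup>2 * (r ^ k * erlang_sum k r + r ^ k / (F * (real k - r))))"
    unfolding erlang_wait_def Let_def r_def[symmetric] sum_eq F_def by (simp add: mult_ac)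
  also have "\<dots> = (mu * sg\<^sup>2 + 1 / mu) / (2 * erlang_denom k r)"
  proof -
    define D where "D = real k - r"
    define E where "E = 1 + F * D * erlang_sum k r"
    have pos: "0 < D" "0 < E" "0 < r ^ k"
      using r F erlang_sum_nonneg[of r k] by (auto simp: D_def E_def add_pos_nonneg)
    have den: "2 * F * D\<^sup>2 * (r ^ k * erlang_sum k r + r ^ k / (F * D)) = r ^ k * (2 * (D * E))"
      using pos F by (simp add: E_def field_simps power2_eq_square)
    have "mu * (sg\<^sup>2 + 1 / mu\<^sup>2) = mu * sg\<^sup>2 + 1 / mu"
      using assms by (simp add: field_simps power2_eq_square)
    then show ?thesis
      using pos r unfolding den erlang_denom_def D_def[symmetric] F_def[symmetric] E_def[symmetric]
      by simp
  qed
  finally show ?thesis unfolding r_def .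
qed

lemma erlang_wait_strict_mono:
  assumes "1 \<le> k" "0 < mu" "0 < lam" "0 \<le> a" "a < b" "b < real k * mu / lam"
  shows "erlang_wait k mu sg lam a < erlang_wait k mu sg lam b"
proof -
  define C where "C = mu * sg\<^sup>2 + 1 / mu"
  have C: "0 < C" unfolding C_def using assms by (simp add: add_nonneg_pos)
  have rb: "0 < b * lam / mu" "b * lam / mu < real k"
    using assms by (auto simp: field_simps)
  have wait_b: "erlang_wait k mu sg lam b = C / (2 * erlang_denom k (b * lam / mu))"
    using assms unfolding C_def by (intro erlang_wait_eq_denom) auto
  have denom_b: "0 < erlang_denom k (b * lam / mu)" using rb by (rule erlang_denom_pos)
  show ?thesis
  proof (cases "a = 0")
    case True
    have "erlang_wait k mu sg lam 0 = 0" by (simp add: erlang_wait_def)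
    with True C denom_b show ?thesis by (simp add: wait_b)
  next
    case False
    then have ra: "0 < a * lam / mu" "a * lam / mu < b * lam / mu"
      using assms by (auto simp: field_simps)
    have "erlang_wait k mu sg lam a = C / (2 * erlang_denom k (a * lam / mu))"
      using assms False unfolding C_def by (intro erlang_wait_eq_denom) auto
    moreover have "erlang_denom k (b * lam / mu) < erlang_denom k (a * lam / mu)"
      using ra rb by (intro erlang_denom_strict_antimono) auto
    ultimately show ?thesis
      using C denom_b by (simp add: wait_b divide_strict_left_mono)
  qed
qed

lemma erlang_wait_tendsto:
  assumes "1 \<le> k" "0 < mu" "0 < lam" "(g \<longlongrightarrow> a) F" "0 \<le> a" "a < real k * mu / lam"
  shows "((\<lambda>x. erlang_wait k mu sg lam (g x)) \<longlongrightarrow> erlang_wait k mu sg lam a) F"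
proof -
  define r where "r = a * lam / mu"
  have r: "0 \<le> r" "r < real k" using assms unfolding r_def by (auto simp: field_simps)
  have "(\<lambda>m. r ^ m / fact m) 0 \<le> (\<Sum>m<k. r ^ m / fact m)"
    using assms r by (intro member_le_sum) auto
  moreover have "0 \<le> r ^ k / (fact (k - 1) * (real k - r))" using r by simp
  ultimately have "0 < (\<Sum>m<k. r ^ m / fact m) + r ^ k / (fact (k - 1) * (real k - r))"
    by simp
  then have "2 * fact (k - 1) * (real k - r)\<^sup>2 *
      ((\<Sum>m<k. r ^ m / fact m) + r ^ k / (fact (k - 1) * (real k - r))) \<noteq> 0"
    using r by simp
  moreover have "fact (k - 1) * (real k - r) \<noteq> 0" using r by simp
  ultimately show ?thesis
    unfolding erlang_wait_def Let_def
    by (intro tendsto_intros assms(4)) (use assms in \<open>simp_all add: r_def\<close>)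
qed

lemma erlang_wait_at_top:
  assumes "1 \<le> k" "0 < mu" "0 < lam" "(g \<longlongrightarrow> real k * mu / lam) F"
    and "eventually (\<lambda>x. 0 < g x \<and> g x < real k * mu / lam) F"
  shows "filterlim (\<lambda>x. erlang_wait k mu sg lam (g x)) at_top F"
proof -
  define C where "C = (mu * sg\<^sup>2 + 1 / mu) / 2"
  have C: "0 < C" unfolding C_def using assms by (simp add: add_nonneg_pos)
  have "((\<lambda>x. g x * lam / mu) \<longlongrightarrow> real k * mu / lam * lam / mu) F"
    by (intro tendsto_intros assms(4)) (use assms in simp)
  then have "((\<lambda>x. g x * lam / mu) \<longlongrightarrow> real k) F" using assms by simp
  then have "((\<lambda>x. erlang_denom k (g x * lam / mu)) \<longlongrightarrow> erlang_denom k (real k)) F"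
    unfolding erlang_denom_def erlang_sum_def
    by (intro tendsto_intros) (use assms in \<open>simp_all\<close>)
  then have denom_0: "((\<lambda>x. erlang_denom k (g x * lam / mu)) \<longlongrightarrow> 0) F"
    by (simp add: erlang_denom_def)
  have "eventually (\<lambda>x. 0 < erlang_denom k (g x * lam / mu)) F"
    using assms(5) by eventually_elim (use assms in \<open>auto intro!: erlang_denom_pos simp: field_simps\<close>)
  with denom_0 have "filterlim (\<lambda>x. C * inverse (erlang_denom k (g x * lam / mu))) at_top F"
    by (intro filterlim_tendsto_pos_mult_at_top[OF tendsto_const C] filterlim_inverse_at_top)
  moreover have "eventually (\<lambda>x. C * inverse (erlang_denom k (g x * lam / mu))
      = erlang_wait k mu sg lam (g x)) F"
    using assms(5) by eventually_elim (use assms in \<open>simp add: erlang_wait_eq_denom C_def field_simps\<close>)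
  ultimately show ?thesis by (rule filterlim_cong[OF refl refl, THEN iffD1, rotated])
qed

section \<open>Best responses and threshold strategies\<close>

lemma mixed_payoff_ereal:
  "mixed_payoff w (ereal u1) (ereal u2) = ereal (u2 + w * (u1 - u2))"
  by (simp add: mixed_payoff_def algebra_simps)

lemma best_response_iff:
  assumes "0 \<le> \<omega>" "\<omega> \<le> 1"
  shows "(\<forall>w\<in>{0..1}. mixed_payoff w (ereal u1) (ereal u2) \<le> mixed_payoff \<omega> (ereal u1) (ereal u2))
     \<longleftrightarrow> (u2 < u1 \<longrightarrow> \<omega> = 1) \<and> (u1 < u2 \<longrightarrow> \<omega> = 0)"
proof
  assume best: "\<forall>w\<in>{0..1}. mixed_payoff w (ereal u1) (ereal u2) \<le> mixed_payoff \<omega> (ereal u1) (ereal u2)"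
  have "1 * (u1 - u2) \<le> \<omega> * (u1 - u2)" "0 * (u1 - u2) \<le> \<omega> * (u1 - u2)"
    using best[rule_format, of 1] best[rule_format, of 0] by (simp_all add: mixed_payoff_ereal)
  then show "(u2 < u1 \<longrightarrow> \<omega> = 1) \<and> (u1 < u2 \<longrightarrow> \<omega> = 0)"
    using assms by (auto simp: mult_le_cancel_right zero_le_mult_iff)
next
  assume "(u2 < u1 \<longrightarrow> \<omega> = 1) \<and> (u1 < u2 \<longrightarrow> \<omega> = 0)"
  then have "w * (u1 - u2) \<le> \<omega> * (u1 - u2)" if "w \<in> {0..1}" for w
    using that by (cases u1 u2 rule: linorder_cases) (auto simp: mult_le_0_iff)
  then show "\<forall>w\<in>{0..1}. mixed_payoff w (ereal u1) (ereal u2) \<le> mixed_payoff \<omega> (ereal u1) (ereal u2)"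
    by (simp add: mixed_payoff_ereal)
qed

lemma best_response_neg_inf_left:
  assumes "\<forall>w\<in>{0..1}. mixed_payoff w (-\<infinity>) (ereal u) \<le> mixed_payoff \<omega> (-\<infinity>) (ereal u)" "0 \<le> \<omega>"
  shows "\<omega> = 0"
  using assms(1)[rule_format, of 0] assms(2) by (cases "\<omega> = 0") (auto simp: mixed_payoff_def)

lemma best_response_neg_inf_right:
  assumes "\<forall>w\<in>{0..1}. mixed_payoff w (ereal u) (-\<infinity>) \<le> mixed_payoff \<omega> (ereal u) (-\<infinity>)" "\<omega> \<le> 1"
  shows "\<omega> = 1"
  using assms(1)[rule_format, of 1] assms(2) by (cases "\<omega> = 1") (auto simp: mixed_payoff_def)

lemma has_integral_threshold:
  fixes L t :: real
  assumes "-L \<le> t" "t \<le> L"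
  shows "((\<lambda>x. if x \<le> t then 1 else 0::real) has_integral (t + L)) {-L..L}"
proof -
  have "((\<lambda>x. 1::real) has_integral (t + L)) {-L..t}"
    using has_integral_const_real[of "1::real" "-L" t] assms by simp
  moreover have "{..t} \<inter> {-L..L} = {-L..t}" using assms by auto
  ultimately have "((\<lambda>x. if x \<in> {..t} then 1 else 0::real) has_integral (t + L)) {-L..L}"
    by (simp only: has_integral_restrict_Int)
  then show ?thesis by simp
qed

lemma strict_mono_on_unbounded_zero:
  fixes f :: "real \<Rightarrow> real"
  assumes "a < b" "continuous_on {a<..<b} f" "strict_mono_on {a<..<b} f"
    and "filterlim f at_bot (at_right a)" "filterlim f at_top (at_left b)"
  obtains x where "a < x" "x < b" "f x = 0"
proof -
  have "eventually (\<lambda>x. (a < x \<and> x < b) \<and> f x \<le> -1) (at_right a)"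
    using eventually_at_right_real[OF \<open>a < b\<close>] assms(4)
    by (auto simp: filterlim_at_bot eventually_conj_iff)
  then obtain u where u: "a < u" "u < b" "f u \<le> 0" using eventually_happens' by force
  have "eventually (\<lambda>x. (a < x \<and> x < b) \<and> 1 \<le> f x) (at_left b)"
    using eventually_at_left_real[OF \<open>a < b\<close>] assms(5)
    by (auto simp: filterlim_at_top eventually_conj_iff)
  then obtain v where v: "a < v" "v < b" "0 \<le> f v" using eventually_happens' by force
  have "u \<le> v"
  proof (rule ccontr)
    assume "\<not> u \<le> v"
    then have "f v < f u" using u v by (intro strict_mono_onD[OF assms(3)]) auto
    with u v show False by simp
  qed
  moreover have "continuous_on {u..v} f" using u v by (intro continuous_on_subset[OF assms(2)]) auto
  ultimately obtain x where "u \<le> x" "x \<le> v" "f x = 0" using IVT'[of f u 0 v] u v by auto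
  with u v show ?thesis using that[of x] by linarith
qed

section \<open>The middle-middle scenario\<close>

text \<open>The strict lower capacity bounds \<open>(L + x\<^sub>1) \<lambda> < k\<^sub>1 \<mu>\<^sub>1\<close> and
  \<open>(L - x\<^sub>2) \<lambda> < k\<^sub>2 \<mu>\<^sub>2\<close> of the scenario, and \<open>x\<^sub>1 < x\<^sub>2\<close>, follow from the
  assumptions below together with the total capacity bound.\<close>
locale pssg_middle =
  fixes L x1 x2 :: real and k1 :: nat and mu1 sg1 :: real and k2 :: nat
    and mu2 sg2 lam kl kq kp d p1 p2 :: real
  assumes L_pos: "0 < L" and x1_gt: "-L < x1" and x2_lt: "x2 < L"
    and k1: "1 \<le> k1" and k2: "1 \<le> k2" and mu1: "0 < mu1" and mu2: "0 < mu2" and lam: "0 < lam"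
    and kl: "0 < kl" and kq: "0 < kq"
    and cap1_le: "real k1 * mu1 \<le> (L + x2) * lam"
    and cap2_le: "real k2 * mu2 \<le> (L - x1) * lam"
    and total_cap: "2 * L * lam < real k1 * mu1 + real k2 * mu2"
begin

definition c1 :: real where "c1 = real k1 * mu1 / lam"
definition c2 :: real where "c2 = real k2 * mu2 / lam"

definition W1 :: "real \<Rightarrow> real" where "W1 = erlang_wait k1 mu1 sg1 lam"
definition W2 :: "real \<Rightarrow> real" where "W2 = erlang_wait k2 mu2 sg2 lam"

definition advantage :: "real \<Rightarrow> real \<Rightarrow> real" where
  "advantage a x = kl * (\<bar>x - x2\<bar> - \<bar>x - x1\<bar>) - kp * d * (p1 - p2) - kq * (W1 a - W2 (2 * L - a))"

definition threshold_fun :: "real \<Rightarrow> real" where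
  "threshold_fun x = kp * d * (p1 - p2) + kl * (2 * x - x1 - x2) + kq * (W1 (x + L) - W2 (L - x))"

abbreviation is_NE :: "(real \<Rightarrow> real) \<Rightarrow> bool" where
  "is_NE \<equiv> pssg_NE L x1 x2 k1 mu1 sg1 k2 mu2 sg2 lam kl kq kp d p1 p2"

lemma window:
  "x1 \<le> L - c2" "L - c2 < c1 - L" "c1 - L \<le> x2"
proof -
  have "c1 \<le> L + x2" "c2 \<le> L - x1"
    using cap1_le cap2_le lam by (simp_all add: c1_def c2_def pos_divide_le_eq)
  moreover have "2 * L < c1 + c2"
    using total_cap lam by (simp add: c1_def c2_def add_divide_distrib[symmetric] pos_less_divide_eq)
  ultimately show "x1 \<le> L - c2" "L - c2 < c1 - L" "c1 - L \<le> x2" by auto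
qed

lemma qwait1: "qwait k1 mu1 sg1 lam a = (if a < c1 then ereal (W1 a) else \<infinity>)"
  unfolding c1_def W1_def by (rule qwait_eq_erlang_wait)

lemma qwait2: "qwait k2 mu2 sg2 lam a = (if a < c2 then ereal (W2 a) else \<infinity>)"
  unfolding c2_def W2_def by (rule qwait_eq_erlang_wait)

lemma W1_strict_mono: "0 \<le> a \<Longrightarrow> a < b \<Longrightarrow> b < c1 \<Longrightarrow> W1 a < W1 b"
  unfolding c1_def W1_def by (rule erlang_wait_strict_mono[OF k1 mu1 lam])

lemma W2_strict_mono: "0 \<le> a \<Longrightarrow> a < b \<Longrightarrow> b < c2 \<Longrightarrow> W2 a < W2 b"
  unfolding c2_def W2_def by (rule erlang_wait_strict_mono[OF k2 mu2 lam])

lemma W1_tendsto: "(g \<longlongrightarrow> a) F \<Longrightarrow> 0 \<le> a \<Longrightarrow> a < c1 \<Longrightarrow> ((\<lambda>x. W1 (g x)) \<longlongrightarrow> W1 a) F"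
  unfolding c1_def W1_def by (rule erlang_wait_tendsto[OF k1 mu1 lam])

lemma W2_tendsto: "(g \<longlongrightarrow> a) F \<Longrightarrow> 0 \<le> a \<Longrightarrow> a < c2 \<Longrightarrow> ((\<lambda>x. W2 (g x)) \<longlongrightarrow> W2 a) F"
  unfolding c2_def W2_def by (rule erlang_wait_tendsto[OF k2 mu2 lam])

lemma pssg_eq_zero_iff:
  assumes "x \<in> {-L..L}"
  shows "pssg_eq L x1 x2 k1 mu1 sg1 k2 mu2 sg2 lam kl kq kp d p1 p2 x = 0 \<longleftrightarrow>
    L - c2 < x \<and> x < c1 - L \<and> threshold_fun x = 0"
proof -
  have "x + L < c1 \<or> L - x < c2" using assms window by auto
  then show ?thesis
    using kq unfolding pssg_eq_def qwait1 qwait2 threshold_fun_def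
    by (auto simp: zero_ereal_def)
qed

lemma threshold_fun_strict_mono: "strict_mono_on {L - c2<..<c1 - L} threshold_fun"
proof (rule strict_mono_onI)
  fix x y assume "x \<in> {L - c2<..<c1 - L}" "y \<in> {L - c2<..<c1 - L}" "x < y"
  then have "W1 (x + L) < W1 (y + L)" "W2 (L - y) < W2 (L - x)"
    using window x1_gt x2_lt by (auto intro!: W1_strict_mono W2_strict_mono)
  with \<open>x < y\<close> show "threshold_fun x < threshold_fun y"
    unfolding threshold_fun_def using kl kq by (simp add: add_strict_mono)
qed


lemma threshold_fun_continuous: "continuous_on {L - c2<..<c1 - L} threshold_fun"
proof (intro continuous_at_imp_continuous_on ballI)
  fix z assume z: "z \<in> {L - c2<..<c1 - L}"
  have "((\<lambda>x. W1 (x + L)) \<longlongrightarrow> W1 (z + L)) (at z)" "((\<lambda>x. W2 (L - x)) \<longlongrightarrow> W2 (L - z)) (at z)"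
    using z window x1_gt x2_lt by (auto intro!: W1_tendsto W2_tendsto tendsto_intros)
  then show "isCont threshold_fun z"
    unfolding isCont_def threshold_fun_def by (intro tendsto_intros)
qed

text \<open>At either end of the window one station becomes overloaded, so its waiting time
  blows up while the other one stays bounded.\<close>
lemma threshold_fun_at_top: "filterlim threshold_fun at_top (at_left (c1 - L))"
proof -
  have "eventually (\<lambda>x. L - c2 < x \<and> x < c1 - L) (at_left (c1 - L))"
    using eventually_at_left_real[OF window(2)] by (rule eventually_mono) auto
  then have "eventually (\<lambda>x. 0 < x + L \<and> x + L < real k1 * mu1 / lam) (at_left (c1 - L))"
    by (rule eventually_mono) (use window x1_gt in \<open>auto simp: c1_def\<close>)
  moreover have "((\<lambda>x. x + L) \<longlongrightarrow> real k1 * mu1 / lam) (at_left (c1 - L))"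
    by (rule tendsto_eq_intros refl)+ (simp add: c1_def)
  ultimately have W1_top: "filterlim (\<lambda>x. W1 (x + L)) at_top (at_left (c1 - L))"
    unfolding W1_def by (intro erlang_wait_at_top[OF k1 mu1 lam])
  have "((\<lambda>x. W2 (L - x)) \<longlongrightarrow> W2 (L - (c1 - L))) (at_left (c1 - L))"
    using window x2_lt by (intro W2_tendsto tendsto_intros) auto
  then have "((\<lambda>x. kp * d * (p1 - p2) + kl * (2 * x - x1 - x2) - kq * W2 (L - x)) \<longlongrightarrow>
      kp * d * (p1 - p2) + kl * (2 * (c1 - L) - x1 - x2) - kq * W2 (L - (c1 - L))) (at_left (c1 - L))"
    by (intro tendsto_intros)
  from filterlim_tendsto_add_at_top[OF this filterlim_tendsto_pos_mult_at_top[OF tendsto_const kq W1_top]]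
  show ?thesis by (simp add: threshold_fun_def[abs_def] algebra_simps)
qed

lemma threshold_fun_at_bot: "filterlim threshold_fun at_bot (at_right (L - c2))"
proof -
  have "eventually (\<lambda>x. L - c2 < x \<and> x < c1 - L) (at_right (L - c2))"
    using eventually_at_right_real[OF window(2)] by (rule eventually_mono) auto
  then have "eventually (\<lambda>x. 0 < L - x \<and> L - x < real k2 * mu2 / lam) (at_right (L - c2))"
    by (rule eventually_mono) (use window x2_lt in \<open>auto simp: c2_def\<close>)
  moreover have "((\<lambda>x. L - x) \<longlongrightarrow> real k2 * mu2 / lam) (at_right (L - c2))"
    by (rule tendsto_eq_intros refl)+ (simp add: c2_def)
  ultimately have W2_top: "filterlim (\<lambda>x. W2 (L - x)) at_top (at_right (L - c2))"
    unfolding W2_def by (intro erlang_wait_at_top[OF k2 mu2 lam])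
  have "((\<lambda>x. W1 (x + L)) \<longlongrightarrow> W1 (L - c2 + L)) (at_right (L - c2))"
    using window x1_gt by (intro W1_tendsto tendsto_intros) auto
  then have "((\<lambda>x. - (kp * d * (p1 - p2) + kl * (2 * x - x1 - x2)) - kq * W1 (x + L)) \<longlongrightarrow>
      - (kp * d * (p1 - p2) + kl * (2 * (L - c2) - x1 - x2)) - kq * W1 (L - c2 + L)) (at_right (L - c2))"
    by (intro tendsto_intros)
  from filterlim_tendsto_add_at_top[OF this filterlim_tendsto_pos_mult_at_top[OF tendsto_const kq W2_top]]
  show ?thesis by (simp add: filterlim_uminus_at_bot threshold_fun_def algebra_simps)
qed

lemma threshold_fun_root:
  obtains xs where "L - c2 < xs" "xs < c1 - L" "threshold_fun xs = 0"
  using strict_mono_on_unbounded_zero[OF window(2) threshold_fun_continuous threshold_fun_strict_mono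
      threshold_fun_at_bot threshold_fun_at_top] .


lemma advantage_strict_antimono:
  assumes "0 \<le> a" "a < b" "b < c1" "2 * L - a < c2" "b \<le> 2 * L"
  shows "advantage b x < advantage a x"
proof -
  have "W1 a < W1 b" "W2 (2 * L - b) < W2 (2 * L - a)"
    using assms by (auto intro!: W1_strict_mono W2_strict_mono)
  then show ?thesis unfolding advantage_def using kq by simp
qed

lemma pssg_NE_iff_advantage:
  assumes "\<forall>x\<in>{-L..L}. 0 \<le> \<omega> x \<and> \<omega> x \<le> 1" "\<omega> integrable_on {-L..L}"
    and "integral {-L..L} \<omega> < c1" "2 * L - integral {-L..L} \<omega> < c2"
  shows "is_NE \<omega> \<longleftrightarrow> (\<forall>x\<in>{-L..L}. (0 < advantage (integral {-L..L} \<omega>) x \<longrightarrow> \<omega> x = 1)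
                                 \<and> (advantage (integral {-L..L} \<omega>) x < 0 \<longrightarrow> \<omega> x = 0))"
proof -
  define A where "A = integral {-L..L} \<omega>"
  define u1 where "u1 x = - kl * \<bar>x - x1\<bar> - kp * d * p1 - kq * W1 A" for x
  define u2 where "u2 x = - kl * \<bar>x - x2\<bar> - kp * d * p2 - kq * W2 (2 * L - A)" for x
  have payoffs: "payoff kl kq kp d x1 p1 (qwait k1 mu1 sg1 lam A) x = ereal (u1 x)"
    "payoff kl kq kp d x2 p2 (qwait k2 mu2 sg2 lam (2 * L - A)) x = ereal (u2 x)" for x
    using assms(3,4) by (simp_all add: A_def qwait1 qwait2 payoff_def u1_def u2_def)
  have diff: "u1 x - u2 x = advantage A x" for x
    by (simp add: u1_def u2_def advantage_def algebra_simps)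
  have response: "(\<forall>w\<in>{0..1}. mixed_payoff w (ereal (u1 x)) (ereal (u2 x))
                    \<le> mixed_payoff (\<omega> x) (ereal (u1 x)) (ereal (u2 x)))
      \<longleftrightarrow> (0 < advantage A x \<longrightarrow> \<omega> x = 1) \<and> (advantage A x < 0 \<longrightarrow> \<omega> x = 0)"
    if "x \<in> {-L..L}" for x
  proof -
    have "0 \<le> \<omega> x" "\<omega> x \<le> 1" using assms(1) that by auto
    from best_response_iff[OF this, of "u1 x" "u2 x"] show ?thesis by (simp add: diff[symmetric])
  qed
  show ?thesis
    using assms(1,2) unfolding pssg_NE_def Let_def A_def[symmetric] payoffs by (simp add: response)
qed

lemma pssg_NE_not_overloaded:
  assumes "is_NE \<omega>"
  shows "integral {-L..L} \<omega> < c1" "2 * L - integral {-L..L} \<omega> < c2"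
proof -
  define A where "A = integral {-L..L} \<omega>"
  have range: "\<forall>x\<in>{-L..L}. 0 \<le> \<omega> x \<and> \<omega> x \<le> 1"
    and best: "\<forall>x\<in>{-L..L}. \<forall>w\<in>{0..1}.
      mixed_payoff w (payoff kl kq kp d x1 p1 (qwait k1 mu1 sg1 lam A) x)
                     (payoff kl kq kp d x2 p2 (qwait k2 mu2 sg2 lam (2 * L - A)) x)
      \<le> mixed_payoff (\<omega> x) (payoff kl kq kp d x1 p1 (qwait k1 mu1 sg1 lam A) x)
                     (payoff kl kq kp d x2 p2 (qwait k2 mu2 sg2 lam (2 * L - A)) x)"
    using assms unfolding pssg_NE_def Let_def A_def by auto
  have "0 < c1" "0 < c2" using window x1_gt x2_lt by auto
  have "A < c1"
  proof (rule ccontr)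
    assume overload: "\<not> A < c1"
    have "\<omega> x = 0" if "x \<in> {-L..L}" for x
    proof -
      have "2 * L - A < c2" using overload window(2) by linarith
      with bspec[OF best that] overload kq range that show ?thesis
        by (intro best_response_neg_inf_left[of _ "\<omega> x"]) (auto simp: qwait1 qwait2 payoff_def)
    qed
    then have "A = integral {-L..L} (\<lambda>_. 0)" unfolding A_def by (intro integral_cong) auto
    with overload \<open>0 < c1\<close> show False by simp
  qed
  moreover have "2 * L - A < c2"
  proof (rule ccontr)
    assume overload: "\<not> 2 * L - A < c2"
    have "\<omega> x = 1" if "x \<in> {-L..L}" for x
      using bspec[OF best that] overload \<open>A < c1\<close> kq range that
      by (intro best_response_neg_inf_right[of _ "\<omega> x"]) (auto simp: qwait1 qwait2 payoff_def)
    then have "A = integral {-L..L} (\<lambda>_. 1)" unfolding A_def by (intro integral_cong) auto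
    with overload \<open>0 < c2\<close> L_pos show False by simp
  qed
  ultimately show "integral {-L..L} \<omega> < c1" "2 * L - integral {-L..L} \<omega> < c2"
    unfolding A_def by auto
qed


lemma pssg_NE_response:
  assumes "is_NE \<omega>" "x \<in> {-L..L}"
  shows "(0 < advantage (integral {-L..L} \<omega>) x \<longrightarrow> \<omega> x = 1)
       \<and> (advantage (integral {-L..L} \<omega>) x < 0 \<longrightarrow> \<omega> x = 0)"
proof -
  have "\<forall>x\<in>{-L..L}. 0 \<le> \<omega> x \<and> \<omega> x \<le> 1" "\<omega> integrable_on {-L..L}"
    using assms(1) unfolding pssg_NE_def by auto
  with assms pssg_NE_not_overloaded[OF assms(1)] show ?thesis
    using pssg_NE_iff_advantage by blast
qed

context
  fixes xs :: real
  assumes root: "L - c2 < xs" "xs < c1 - L" "threshold_fun xs = 0"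
begin

lemma root_between_stations: "x1 < xs" "xs < x2"
  using root window by auto

text \<open>At the root the waiting-time terms cancel, leaving only the travel distances.\<close>
lemma advantage_at_root:
  "advantage (xs + L) x = kl * ((\<bar>x - x2\<bar> - \<bar>x - x1\<bar>) - (x1 + x2 - 2 * xs))"
  using root(3) by (simp add: advantage_def threshold_fun_def algebra_simps)

lemma advantage_at_root_pos: "x \<le> xs \<Longrightarrow> 0 \<le> advantage (xs + L) x" "x < xs \<Longrightarrow> 0 < advantage (xs + L) x"
  using root_between_stations kl by (auto simp: advantage_at_root abs_if)

lemma advantage_at_root_neg: "xs \<le> x \<Longrightarrow> advantage (xs + L) x \<le> 0" "xs < x \<Longrightarrow> advantage (xs + L) x < 0"
  using root_between_stations kl by (auto simp: advantage_at_root abs_if mult_le_0_iff mult_less_0_iff)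

lemma threshold_strategy_integral:
  "((\<lambda>x. if x \<le> xs then 1 else 0 :: real) has_integral (xs + L)) {-L..L}"
  using root_between_stations x1_gt x2_lt by (intro has_integral_threshold) auto

lemma threshold_strategy_is_NE: "is_NE (\<lambda>x. if x \<le> xs then 1 else 0)"
proof -
  have "(\<lambda>x. if x \<le> xs then 1 else 0 :: real) integrable_on {-L..L}"
    "integral {-L..L} (\<lambda>x. if x \<le> xs then 1 else 0 :: real) = xs + L"
    using threshold_strategy_integral by (auto simp: has_integral_iff)
  with root show ?thesis
    by (subst pssg_NE_iff_advantage)
      (auto simp: not_le dest: advantage_at_root_pos(1) advantage_at_root_neg(2))
qed

text \<open>If an equilibrium loaded station 1 less (more) than the threshold strategy does, then
  station 1 would be strictly more (less) attractive everywhere, so every PEV left (right) of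
  \<open>xs\<close> would pick it (avoid it), and the load would be at least (at most) \<open>xs + L\<close>.\<close>
lemma pssg_NE_load:
  assumes NE: "is_NE \<omega>"
  shows "integral {-L..L} \<omega> = xs + L"
proof -
  define A where "A = integral {-L..L} \<omega>"
  define \<theta> where "\<theta> x = (if x \<le> xs then 1 else 0 :: real)" for x
  have range: "\<forall>x\<in>{-L..L}. 0 \<le> \<omega> x \<and> \<omega> x \<le> 1" and int: "\<omega> integrable_on {-L..L}"
    using NE unfolding pssg_NE_def by auto
  have "0 \<le> A" unfolding A_def using range int by (intro integral_nonneg) auto
  have "A \<le> integral {-L..L} (\<lambda>_. 1)" unfolding A_def using range int by (intro integral_le) auto
  then have "A \<le> 2 * L" using L_pos by simp
  have "A < c1" "2 * L - A < c2" using pssg_NE_not_overloaded[OF NE] unfolding A_def by auto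
  have \<theta>: "\<theta> integrable_on {-L..L}" "integral {-L..L} \<theta> = xs + L"
    using threshold_strategy_integral unfolding \<theta>_def[abs_def] by (auto simp: has_integral_iff)
  have response: "(0 < advantage A x \<longrightarrow> \<omega> x = 1) \<and> (advantage A x < 0 \<longrightarrow> \<omega> x = 0)"
    if "x \<in> {-L..L}" for x
    using pssg_NE_response[OF NE that] unfolding A_def .
  show ?thesis
  proof (rule linorder_cases[of A "xs + L"])
    assume less: "A < xs + L"
    have "\<theta> x \<le> \<omega> x" if "x \<in> {-L..L}" for x
    proof (cases "x \<le> xs")
      case True
      have "advantage (xs + L) x < advantage A x"
        using \<open>0 \<le> A\<close> less root \<open>2 * L - A < c2\<close> x2_lt root_between_stations
        by (intro advantage_strict_antimono) auto
      with advantage_at_root_pos(1)[OF True] response[OF that] show ?thesis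
        unfolding \<theta>_def by simp
    qed (use range that in \<open>auto simp: \<theta>_def\<close>)
    then have "xs + L \<le> A" unfolding A_def \<theta>(2)[symmetric] using \<theta>(1) int by (intro integral_le)
    with less show ?thesis by simp
  next
    assume greater: "xs + L < A"
    have "\<omega> x \<le> \<theta> x" if "x \<in> {-L..L}" for x
    proof (cases "xs \<le> x")
      case True
      have "advantage A x < advantage (xs + L) x"
        using greater root \<open>A < c1\<close> \<open>A \<le> 2 * L\<close> x1_gt root_between_stations
        by (intro advantage_strict_antimono) auto
      with advantage_at_root_neg(1)[OF True] response[OF that] show ?thesis
        unfolding \<theta>_def by auto
    qed (use range that in \<open>auto simp: \<theta>_def\<close>)
    then have "A \<le> xs + L" unfolding A_def \<theta>(2)[symmetric] using \<theta>(1) int by (intro integral_le)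
    with greater show ?thesis by simp
  qed (simp add: A_def)
qed

lemma pssg_NE_unique:
  assumes "is_NE \<omega>" "x \<in> {-L..L}" "x \<noteq> xs"
  shows "\<omega> x = (if x \<le> xs then 1 else 0)"
  using pssg_NE_response[OF assms(1,2)] assms(3) advantage_at_root_pos(2) advantage_at_root_neg(2)
  unfolding pssg_NE_load[OF assms(1)] by force

end

end

theorem theorem5:
  fixes L x1 x2 mu1 mu2 sg1 sg2 lam kl kq kp d pmin pmax p1 p2 :: real
    and k1 k2 :: nat
  assumes "L > 0" and "-L < x1" and "x1 < x2" and "x2 < L"
    and "k1 \<ge> 1" and "k2 \<ge> 1" and "mu1 > 0" and "mu2 > 0" and "lam > 0"
    and "kl > 0" and "kq > 0" and "kp > 0" and "d > 0"
    and "p1 \<in> {pmin..pmax}" and "p2 \<in> {pmin..pmax}"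
    and "(L + x1) * lam < real k1 * mu1" and "real k1 * mu1 \<le> (L + x2) * lam"
    and "(L - x2) * lam < real k2 * mu2" and "real k2 * mu2 \<le> (L - x1) * lam"
    and "real k1 * mu1 + real k2 * mu2 > 2 * L * lam"
  shows "\<exists>xs. xs \<in> {-L..L}
           \<and> pssg_eq L x1 x2 k1 mu1 sg1 k2 mu2 sg2 lam kl kq kp d p1 p2 xs = 0
           \<and> (\<forall>y\<in>{-L..L}. pssg_eq L x1 x2 k1 mu1 sg1 k2 mu2 sg2 lam kl kq kp d p1 p2 y = 0
                 \<longrightarrow> y = xs)
           \<and> L - real k2 * mu2 / lam < xs \<and> xs < real k1 * mu1 / lam - L
           \<and> pssg_NE L x1 x2 k1 mu1 sg1 k2 mu2 sg2 lam kl kq kp d p1 p2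
               (\<lambda>x. if x \<le> xs then 1 else 0)
           \<and> (\<forall>\<omega>. pssg_NE L x1 x2 k1 mu1 sg1 k2 mu2 sg2 lam kl kq kp d p1 p2 \<omega> \<longrightarrow>
                 (\<forall>x\<in>{-L..L}. x \<noteq> xs \<longrightarrow> \<omega> x = (if x \<le> xs then 1 else 0)))"
proof -
  interpret pssg_middle L x1 x2 k1 mu1 sg1 k2 mu2 sg2 lam kl kq kp d p1 p2
    using assms by unfold_locales (auto simp: algebra_simps)
  obtain xs where root: "L - c2 < xs" "xs < c1 - L" "threshold_fun xs = 0"
    by (rule threshold_fun_root)
  have xs: "xs \<in> {-L..L}" using root_between_stations[OF root] x1_gt x2_lt by auto
  have unique: "y = xs"
    if "y \<in> {-L..L}" "pssg_eq L x1 x2 k1 mu1 sg1 k2 mu2 sg2 lam kl kq kp d p1 p2 y = 0" for y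
    using that root strict_mono_on_imp_inj_on[OF threshold_fun_strict_mono]
    by (auto simp: pssg_eq_zero_iff inj_on_def)
  show ?thesis
  proof (intro exI[of _ xs] conjI ballI allI impI)
    show "pssg_eq L x1 x2 k1 mu1 sg1 k2 mu2 sg2 lam kl kq kp d p1 p2 xs = 0"
      using xs root by (simp add: pssg_eq_zero_iff)
    show "L - real k2 * mu2 / lam < xs" "xs < real k1 * mu1 / lam - L"
      using root by (simp_all add: c1_def c2_def)
  qed (use xs unique threshold_strategy_is_NE[OF root] pssg_NE_unique[OF root] in auto)
qed

end
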